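(* For every $n\ge1$, the smallest size $C(n)$ of a banded asymmetric covering $\mathcal{D}(n,1)$ is $$C(n)=\sum_{i=0}^{\lfloor n/2\rfloor}C(n+1,\,n+1-2i,\,n-2i).$$
   Context: An asymmetric covering $\mathcal{D}(n,1)$ is a set $\mathcal{D}\subseteq\mathbb{F}_2^n$ such that every $v\in\mathbb{F}_2^n$ either lies in $\mathcal{D}$ or is covered by (has support contained in the support of) some $u\in\mathcal{D}$ with $\mathrm{wt}(u)=\mathrm{wt}(v)+1$. It is banded if every $v$ of odd co-weight $n-\mathrm{wt}(v)$ is covered by some $u\in\mathcal{D}$ with $\mathrm{wt}(u)=\mathrm{wt}(v)+1$. $C(v,k,t)$ denotes the smallest size of a covering design $\mathcal{C}(v,k,t)$, i.e. a collection of $k$-subsets of a $v$-set such that every $t$-subset is contained in at least one of them. *)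

theory Defs
  imports Main
begin

text \<open>Vectors of F_2^n are represented by their supports, i.e. subsets of {0..<n};
  the weight of a vector is the cardinality of its support.\<close>

definition covers :: "nat set \<Rightarrow> nat set \<Rightarrow> bool" where
  "covers u v \<longleftrightarrow> v \<subseteq> u \<and> card u = card v + 1"

definition asym_covering :: "nat \<Rightarrow> nat set set \<Rightarrow> bool" where
  "asym_covering n D \<longleftrightarrow> D \<subseteq> Pow {0..<n} \<and>
     (\<forall>v \<in> Pow {0..<n}. v \<in> D \<or> (\<exists>u \<in> D. covers u v))"

definition banded :: "nat \<Rightarrow> nat set set \<Rightarrow> bool" where
  "banded n D \<longleftrightarrow>
     (\<forall>v \<in> Pow {0..<n}. odd (n - card v) \<longrightarrow> (\<exists>u \<in> D. covers u v))"

definition min_banded_covering :: "nat \<Rightarrow> nat" where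
  "min_banded_covering n =
     (LEAST m. \<exists>D. asym_covering n D \<and> banded n D \<and> card D = m)"

definition covering_number :: "nat \<Rightarrow> nat \<Rightarrow> nat \<Rightarrow> nat" where
  "covering_number v k t =
     (LEAST m. \<exists>B. B \<subseteq> {S. S \<subseteq> {0..<v} \<and> card S = k} \<and>
        (\<forall>T. T \<subseteq> {0..<v} \<and> card T = t \<longrightarrow> (\<exists>S \<in> B. T \<subseteq> S)) \<and>
        card B = m)"

end

theory Submission
  imports Defs
begin

text \<open>Adjoining the new point \<open>n\<close> to those \<open>u \<subseteq> {0..<n}\<close> with \<open>n - |u|\<close> even is a bijection
  from the subsets of \<open>{0..<n}\<close> onto the subsets of \<open>{0..<n+1}\<close> of even co-size; adjoining it
  when \<open>n - |u|\<close> is odd is a bijection onto those of odd co-size. Under these bijections a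
  banded asymmetric covering becomes a family \<open>F\<close> of sets of even co-size such that every set
  \<open>T\<close> of odd co-size lies in a member of \<open>F\<close> of size \<open>|T| + 1\<close>: a vector of odd co-size is
  covered by banding, and one of even co-size \<open>v\<close> is either covered or lies in the covering,
  which becomes \<open>v \<union> {n}\<close>. The members of \<open>F\<close> of size \<open>n + 1 - 2i\<close> form precisely a covering
  design \<open>C(n+1, n+1-2i, n-2i)\<close>, and these layers can be chosen independently.\<close>

definition covering_design :: "nat \<Rightarrow> nat \<Rightarrow> nat \<Rightarrow> nat set set \<Rightarrow> bool" where
  "covering_design v k t B \<longleftrightarrow> B \<subseteq> {S. S \<subseteq> {0..<v} \<and> card S = k} \<and>
     (\<forall>T. T \<subseteq> {0..<v} \<and> card T = t \<longrightarrow> (\<exists>S\<in>B. T \<subseteq> S))"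

lemma covering_number_eq_Least:
  "covering_number v k t = (LEAST m. \<exists>B. covering_design v k t B \<and> card B = m)"
  unfolding covering_number_def covering_design_def by simp

lemma covering_design_memD:
  "covering_design v k t B \<Longrightarrow> S \<in> B \<Longrightarrow> S \<subseteq> {0..<v} \<and> card S = k"
  unfolding covering_design_def by blast

lemma covering_design_covers:
  "covering_design v k t B \<Longrightarrow> T \<subseteq> {0..<v} \<Longrightarrow> card T = t \<Longrightarrow> \<exists>S\<in>B. T \<subseteq> S"
  unfolding covering_design_def by blast

lemma finite_covering_design: "covering_design v k t B \<Longrightarrow> finite B"
  unfolding covering_design_def by (auto intro: finite_subset[of _ "Pow {0..<v}"])

lemma covering_number_le_card: "covering_design v k t B \<Longrightarrow> covering_number v k t \<le> card B"
  unfolding covering_number_eq_Least by (rule Least_le) blast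

lemma covering_design_all_subsets:
  assumes "t \<le> k" "k \<le> v"
  shows "covering_design v k t {S. S \<subseteq> {0..<v} \<and> card S = k}"
  unfolding covering_design_def
proof (intro conjI allI impI)
  fix T assume "T \<subseteq> {0..<v} \<and> card T = t"
  then obtain S where "T \<subseteq> S" "S \<subseteq> {0..<v}" "card S = k"
    using exists_subset_between[of T k "{0..<v}"] assms by auto
  then show "\<exists>S\<in>{S. S \<subseteq> {0..<v} \<and> card S = k}. T \<subseteq> S" by blast
qed simp

lemma obtain_optimal_covering_design:
  assumes "t \<le> k" "k \<le> v"
  obtains B where "covering_design v k t B" "card B = covering_number v k t"
  using LeastI_ex[of "\<lambda>m. \<exists>B. covering_design v k t B \<and> card B = m"]
    covering_design_all_subsets[OF assms]
  unfolding covering_number_eq_Least by blast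

lemma card_UN_of_card_inj:
  assumes "finite I" "inj_on f I" "\<And>i. i \<in> I \<Longrightarrow> finite (B i)"
    and "\<And>i S. i \<in> I \<Longrightarrow> S \<in> B i \<Longrightarrow> card S = f i"
  shows "card (\<Union>i\<in>I. B i) = (\<Sum>i\<in>I. card (B i))"
proof (rule card_UN_disjoint)
  show "\<forall>i\<in>I. \<forall>j\<in>I. i \<noteq> j \<longrightarrow> B i \<inter> B j = {}"
    using assms(2,4) by (metis disjoint_iff inj_onD)
qed (use assms in auto)

definition parity_cover :: "nat \<Rightarrow> nat set set \<Rightarrow> bool" where
  "parity_cover m F \<longleftrightarrow> F \<subseteq> {S. S \<subseteq> {0..<m} \<and> even (m - card S)} \<and>
     (\<forall>T. T \<subseteq> {0..<m} \<and> odd (m - card T) \<longrightarrow> (\<exists>S\<in>F. covers S T))"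

lemma parity_cover_layer:
  assumes "parity_cover (Suc n) F" "2 * i \<le> n"
  shows "covering_design (Suc n) (Suc n - 2 * i) (n - 2 * i) {S \<in> F. card S = Suc n - 2 * i}"
  unfolding covering_design_def
proof (intro conjI allI impI)
  show "{S \<in> F. card S = Suc n - 2 * i} \<subseteq> {S. S \<subseteq> {0..<Suc n} \<and> card S = Suc n - 2 * i}"
    using assms(1) unfolding parity_cover_def by auto
next
  fix T assume T: "T \<subseteq> {0..<Suc n} \<and> card T = n - 2 * i"
  with assms have "odd (Suc n - card T)" by (simp add: Suc_diff_le)
  with T assms(1) obtain S where "S \<in> F" "covers S T"
    unfolding parity_cover_def by blast
  with T assms(2) show "\<exists>S\<in>{S \<in> F. card S = Suc n - 2 * i}. T \<subseteq> S"
    unfolding covers_def by auto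
qed

lemma parity_cover_UN_layers:
  assumes "\<And>i. 2 * i \<le> n \<Longrightarrow> covering_design (Suc n) (Suc n - 2 * i) (n - 2 * i) (B i)"
  shows "parity_cover (Suc n) (\<Union>i\<in>{0..n div 2}. B i)"
  unfolding parity_cover_def
proof (intro conjI allI impI)
  show "(\<Union>i\<in>{0..n div 2}. B i) \<subseteq> {S. S \<subseteq> {0..<Suc n} \<and> even (Suc n - card S)}"
  proof (intro subsetI, elim UN_E)
    fix S i assume "i \<in> {0..n div 2}" "S \<in> B i"
    then have "2 * i \<le> n" by auto
    with assms \<open>S \<in> B i\<close> have "S \<subseteq> {0..<Suc n}" "card S = Suc n - 2 * i"
      using covering_design_memD by blast+
    moreover have "Suc n - card S = 2 * i"
      using \<open>card S = Suc n - 2 * i\<close> \<open>2 * i \<le> n\<close> by linarith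
    then have "even (Suc n - card S)" by simp
    ultimately show "S \<in> {S. S \<subseteq> {0..<Suc n} \<and> even (Suc n - card S)}"
      by blast
  qed
next
  fix T assume T: "T \<subseteq> {0..<Suc n} \<and> odd (Suc n - card T)"
  then have "card T \<noteq> Suc n" by auto
  with T have "card T \<le> n"
    using subset_eq_atLeast0_lessThan_card[of T "Suc n"] by linarith
  define i where "i = (n - card T) div 2"
  have "even (n - card T)"
    using T \<open>card T \<le> n\<close> by (simp add: Suc_diff_le)
  then have i: "card T = n - 2 * i" "2 * i \<le> n"
    using \<open>card T \<le> n\<close> unfolding i_def by (auto elim!: evenE)
  then obtain S where "S \<in> B i" "T \<subseteq> S"
    using T covering_design_covers[OF assms] by blast
  moreover have "card S = card T + 1"
    using covering_design_memD[OF assms \<open>S \<in> B i\<close>] i by auto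
  moreover have "i \<in> {0..n div 2}"
    using i by auto
  ultimately show "\<exists>S\<in>\<Union>i\<in>{0..n div 2}. B i. covers S T"
    unfolding covers_def by blast
qed

lemma inj_on_layer_size: "inj_on (\<lambda>i. Suc n - 2 * i) {0..n div 2}"
proof (rule inj_onI)
  fix i j assume "i \<in> {0..n div 2}" "j \<in> {0..n div 2}" "Suc n - 2 * i = Suc n - 2 * j"
  then show "i = j" by simp
qed

lemma sum_covering_numbers_le_card_parity_cover:
  assumes "parity_cover (Suc n) F"
  shows "(\<Sum>i = 0..n div 2. covering_number (Suc n) (Suc n - 2 * i) (n - 2 * i)) \<le> card F"
proof -
  let ?layer = "\<lambda>i. {S \<in> F. card S = Suc n - 2 * i}"
  have layer: "covering_design (Suc n) (Suc n - 2 * i) (n - 2 * i) (?layer i)"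
    if "i \<in> {0..n div 2}" for i
    using parity_cover_layer[OF assms] that by simp
  have "finite F"
    using assms unfolding parity_cover_def by (auto intro: finite_subset[of _ "Pow {0..<Suc n}"])
  have "(\<Sum>i = 0..n div 2. covering_number (Suc n) (Suc n - 2 * i) (n - 2 * i))
      \<le> (\<Sum>i = 0..n div 2. card (?layer i))"
    by (intro sum_mono covering_number_le_card layer)
  also have "\<dots> = card (\<Union>i\<in>{0..n div 2}. ?layer i)"
    by (rule card_UN_of_card_inj[symmetric, OF _ inj_on_layer_size]) (use \<open>finite F\<close> in auto)
  also have "\<dots> \<le> card F"
    using \<open>finite F\<close> by (intro card_mono) auto
  finally show ?thesis .
qed

lemma obtain_parity_cover_of_sum_card:
  obtains F where "parity_cover (Suc n) F"
    and "card F = (\<Sum>i = 0..n div 2. covering_number (Suc n) (Suc n - 2 * i) (n - 2 * i))"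
proof -
  let ?c = "\<lambda>i. covering_number (Suc n) (Suc n - 2 * i) (n - 2 * i)"
  have "\<exists>B. covering_design (Suc n) (Suc n - 2 * i) (n - 2 * i) B \<and> card B = ?c i" for i
    by (rule obtain_optimal_covering_design[of "n - 2 * i" "Suc n - 2 * i" "Suc n"]) auto
  then obtain B where B: "\<And>i. covering_design (Suc n) (Suc n - 2 * i) (n - 2 * i) (B i)"
    and card_B: "\<And>i. card (B i) = ?c i"
    by metis
  have "card (\<Union>i\<in>{0..n div 2}. B i) = (\<Sum>i = 0..n div 2. card (B i))"
  proof (rule card_UN_of_card_inj[OF _ inj_on_layer_size])
    show "finite (B i)" for i
      using finite_covering_design[OF B] .
    show "card S = Suc n - 2 * i" if "S \<in> B i" for i S
      using covering_design_memD[OF B that] by blast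
  qed simp
  with B card_B show thesis
    by (intro that[OF parity_cover_UN_layers]) simp_all
qed

definition parity_lift :: "bool \<Rightarrow> nat \<Rightarrow> nat set \<Rightarrow> nat set" where
  "parity_lift b n u = (if even (n - card u) = b then insert n u else u)"

lemma parity_lift_subset: "u \<subseteq> {0..<n} \<Longrightarrow> parity_lift b n u \<subseteq> {0..<Suc n}"
  unfolding parity_lift_def by auto

lemma parity_lift_minus: "u \<subseteq> {0..<n} \<Longrightarrow> parity_lift b n u - {n} = u"
  unfolding parity_lift_def by auto

lemma card_parity_lift:
  assumes "u \<subseteq> {0..<n}"
  shows "card (parity_lift b n u) = (if even (n - card u) = b then Suc (card u) else card u)"
proof -
  have "finite u" "n \<notin> u"
    using assms finite_subset by auto
  then show ?thesis
    unfolding parity_lift_def by simp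
qed

lemma even_card_parity_lift:
  assumes "u \<subseteq> {0..<n}"
  shows "even (Suc n - card (parity_lift b n u)) = b"
  using card_parity_lift[OF assms, of b] subset_eq_atLeast0_lessThan_card[OF assms]
  by (cases b) (auto simp: Suc_diff_le)

lemma inj_on_parity_lift: "inj_on (parity_lift b n) (Pow {0..<n})"
  by (rule inj_on_inverseI[where g = "\<lambda>S. S - {n}"]) (simp add: parity_lift_minus)

lemma card_parity_lift_image: "D \<subseteq> Pow {0..<n} \<Longrightarrow> card (parity_lift b n ` D) = card D"
  by (rule card_image) (rule inj_on_subset[OF inj_on_parity_lift])

lemma parity_lift_minus_eq:
  assumes "S \<subseteq> {0..<Suc n}" "even (Suc n - card S) = b"
  shows "parity_lift b n (S - {n}) = S"
proof (cases "n \<in> S")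
  case True
  have "finite S" using assms(1) finite_subset by blast
  with True have "card (S - {n}) = card S - 1" "card S \<noteq> 0" by auto
  moreover have "card S \<le> Suc n"
    using subset_eq_atLeast0_lessThan_card[OF assms(1)] .
  ultimately have "n - card (S - {n}) = Suc n - card S" by linarith
  with True assms(2) show ?thesis
    unfolding parity_lift_def by auto
next
  case False
  with assms(1) have "card S \<le> n"
    using subset_eq_atLeast0_lessThan_card[of S n] by (auto simp: subset_iff less_Suc_eq)
  with False assms(2) show ?thesis
    unfolding parity_lift_def by (auto simp: Suc_diff_le)
qed

lemma parity_lift_image:
  "parity_lift b n ` Pow {0..<n} = {S. S \<subseteq> {0..<Suc n} \<and> even (Suc n - card S) = b}"
proof
  show "parity_lift b n ` Pow {0..<n} \<subseteq> {S. S \<subseteq> {0..<Suc n} \<and> even (Suc n - card S) = b}"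
    using parity_lift_subset even_card_parity_lift by blast
next
  show "{S. S \<subseteq> {0..<Suc n} \<and> even (Suc n - card S) = b} \<subseteq> parity_lift b n ` Pow {0..<n}"
  proof
    fix S assume S: "S \<in> {S. S \<subseteq> {0..<Suc n} \<and> even (Suc n - card S) = b}"
    then have "S - {n} \<in> Pow {0..<n}" by auto
    moreover have "parity_lift b n (S - {n}) = S"
      using S parity_lift_minus_eq by blast
    ultimately show "S \<in> parity_lift b n ` Pow {0..<n}" by (metis image_eqI)
  qed
qed

lemma covers_parity_lift_iff:
  assumes u: "u \<subseteq> {0..<n}" and v: "v \<subseteq> {0..<n}"
  shows "covers (parity_lift True n u) (parity_lift False n v) \<longleftrightarrow>
    covers u v \<or> (u = v \<and> even (n - card v))"
proof -
  have fin: "finite u" "finite v" and out: "n \<notin> u" "n \<notin> v"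
    using u v finite_subset by auto
  have le: "card u \<le> n" "card v \<le> n"
    using u v by (simp_all add: subset_eq_atLeast0_lessThan_card)
  have covers_parity: "even (n - card u) \<longleftrightarrow> odd (n - card v)" if "covers u v"
    using that le unfolding covers_def by (auto simp: Suc_diff_le)
  show ?thesis
  proof (cases "even (n - card v)")
    case True
    then have "parity_lift False n v = v" unfolding parity_lift_def by simp
    moreover have "covers (parity_lift True n u) v \<longleftrightarrow> covers u v \<or> u = v"
    proof (cases "even (n - card u)")
      case True
      then have "\<not> covers u v" using \<open>even (n - card v)\<close> covers_parity by blast
      moreover have "covers (insert n u) v \<longleftrightarrow> v \<subseteq> u \<and> card v = card u"
        using fin out unfolding covers_def by (auto simp: subset_insert)
      moreover have "v \<subseteq> u \<and> card v = card u \<longleftrightarrow> u = v"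
        using fin card_subset_eq by blast
      ultimately show ?thesis
        using True unfolding parity_lift_def by simp
    next
      case False
      with \<open>even (n - card v)\<close> have "u \<noteq> v" by auto
      with False show ?thesis
        unfolding parity_lift_def by simp
    qed
    ultimately show ?thesis using True by auto
  next
    case False
    then have "parity_lift False n v = insert n v" unfolding parity_lift_def by simp
    moreover have "covers (parity_lift True n u) (insert n v) \<longleftrightarrow> covers u v"
    proof
      assume cov: "covers (parity_lift True n u) (insert n v)"
      then have "n \<in> parity_lift True n u" unfolding covers_def by auto
      then have "parity_lift True n u = insert n u"
        using out unfolding parity_lift_def by (auto split: if_splits)
      with cov fin out show "covers u v" unfolding covers_def by auto
    next
      assume "covers u v"
      with covers_parity False have "even (n - card u)" by blast
      then have "parity_lift True n u = insert n u"
        unfolding parity_lift_def by simp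
      with \<open>covers u v\<close> fin out show "covers (parity_lift True n u) (insert n v)"
        unfolding covers_def by auto
    qed
    ultimately show ?thesis using False by auto
  qed
qed

lemma banded_covering_iff_parity_cover:
  assumes D: "D \<subseteq> Pow {0..<n}"
  shows "asym_covering n D \<and> banded n D \<longleftrightarrow> parity_cover (Suc n) (parity_lift True n ` D)"
proof -
  have "asym_covering n D \<and> banded n D \<longleftrightarrow>
      (\<forall>v\<in>Pow {0..<n}. \<exists>u\<in>D. covers u v \<or> (u = v \<and> even (n - card v)))"
    using D unfolding asym_covering_def banded_def by blast
  also have "\<dots> \<longleftrightarrow> (\<forall>v\<in>Pow {0..<n}. \<exists>u\<in>D. covers (parity_lift True n u) (parity_lift False n v))"
    using D covers_parity_lift_iff by (metis PowD in_mono)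
  also have "\<dots> \<longleftrightarrow> (\<forall>T\<in>parity_lift False n ` Pow {0..<n}. \<exists>S\<in>parity_lift True n ` D. covers S T)"
    by simp
  also have "\<dots> \<longleftrightarrow> parity_cover (Suc n) (parity_lift True n ` D)"
    using image_mono[OF D, of "parity_lift True n"]
    unfolding parity_cover_def parity_lift_image by auto
  finally show ?thesis .
qed

lemma banded_covering_of_parity_cover:
  assumes "parity_cover (Suc n) F"
  obtains D where "asym_covering n D" "banded n D" "card D = card F"
proof -
  define D where "D = {u \<in> Pow {0..<n}. parity_lift True n u \<in> F}"
  have image: "parity_lift True n ` D = F"
  proof
    show "parity_lift True n ` D \<subseteq> F"
      unfolding D_def by auto
    show "F \<subseteq> parity_lift True n ` D"
    proof
      fix S assume "S \<in> F"
      with assms have "S \<in> parity_lift True n ` Pow {0..<n}"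
        unfolding parity_cover_def parity_lift_image by auto
      with \<open>S \<in> F\<close> show "S \<in> parity_lift True n ` D"
        unfolding D_def by auto
    qed
  qed
  have "D \<subseteq> Pow {0..<n}"
    unfolding D_def by blast
  then have "card D = card F"
    using card_parity_lift_image[of D n True] image by simp
  moreover have "asym_covering n D \<and> banded n D"
    using banded_covering_iff_parity_cover[OF \<open>D \<subseteq> Pow {0..<n}\<close>] assms image by simp
  ultimately show thesis
    using that by blast
qed

lemma sum_covering_numbers_le_card_banded_covering:
  assumes "asym_covering n D" "banded n D"
  shows "(\<Sum>i = 0..n div 2. covering_number (Suc n) (Suc n - 2 * i) (n - 2 * i)) \<le> card D"
proof -
  have "D \<subseteq> Pow {0..<n}"
    using assms(1) unfolding asym_covering_def by blast
  with assms have "parity_cover (Suc n) (parity_lift True n ` D)"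
    using banded_covering_iff_parity_cover by blast
  then have "(\<Sum>i = 0..n div 2. covering_number (Suc n) (Suc n - 2 * i) (n - 2 * i))
      \<le> card (parity_lift True n ` D)"
    by (rule sum_covering_numbers_le_card_parity_cover)
  with card_parity_lift_image[OF \<open>D \<subseteq> Pow {0..<n}\<close>] show ?thesis
    by simp
qed

theorem corollary2:
  fixes n :: nat
  assumes "n \<ge> 1"
  shows "min_banded_covering n =
    (\<Sum>i = 0..n div 2. covering_number (n + 1) (n + 1 - 2 * i) (n - 2 * i))"
proof -
  let ?C = "\<Sum>i = 0..n div 2. covering_number (Suc n) (Suc n - 2 * i) (n - 2 * i)"
  have "(LEAST m. \<exists>D. asym_covering n D \<and> banded n D \<and> card D = m) = ?C"
  proof (rule Least_equality)
    obtain F where "parity_cover (Suc n) F" "card F = ?C"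
      by (rule obtain_parity_cover_of_sum_card)
    then show "\<exists>D. asym_covering n D \<and> banded n D \<and> card D = ?C"
      by (metis banded_covering_of_parity_cover)
  next
    show "?C \<le> m" if "\<exists>D. asym_covering n D \<and> banded n D \<and> card D = m" for m
      using that sum_covering_numbers_le_card_banded_covering by blast
  qed
  then show ?thesis
    unfolding min_banded_covering_def by simp
qed

end
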